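(* For every $n\ge 3$ and every Greene–Kleitman chain $C$ in $Q_n$ with $|C|\ge 3$, the chains $f( *C* )$ and $f( *\ell(C)* )$ are connected at their bottom ends in $Q_{n+2}$. Specifically, if $C=u*C'$ with $u\in D$ and $C'$ containing at least two $*$s, then $f( *C* )=0\,u\,1\,C'\,*$ and $f( *\ell(C)* )=0\,u\,1\,\ell(C')\,*$; i.e., the chains $f( *C* )$ and $f( *\ell(C)* )$ differ in exactly two positions.
   Context: $Q_n$ is the hypercube on $\{0,1\}^n$. Let $D$ be the set of bitstrings (including the empty string) with equally many $0$s and $1$s such that every prefix has at least as many $0$s as $1$s. A Greene–Kleitman chain in $Q_n$ is a string of length $n$ over $\{0,1,*\}$ of the form $u_0*u_1*\cdots*u_{h-1}*u_h$ with all $u_j\in D$, representing the path whose vertices are obtained by replacing the $*$s by $i$ ones followed by $h-i$ zeros; $|C|=h$ is its number of $*$s, and its bottom end $b(C)$ is obtained by replacing all $*$s by $0$. For a string $C$ over $\{0,1,*\}$ with at least two $*$s, $f(C)$ (resp. $\ell(C)$) is obtained by replacing the first two (resp. last two) $*$s by $0$ and $1$, respectively. Juxtaposition denotes concatenation. Two chains are connected at their bottom ends if their bottom ends differ in exactly one position. *)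

theory Defs
  imports Main
begin

datatype sym = Zero | One | Star

definition stars :: "sym list \<Rightarrow> nat" where
  "stars C = length (filter (\<lambda>x. x = Star) C)"

definition cnt :: "sym \<Rightarrow> sym list \<Rightarrow> nat" where
  "cnt a w = length (filter (\<lambda>x. x = a) w)"

definition dyck :: "sym list set" where
  "dyck = {w. Star \<notin> set w \<and> cnt Zero w = cnt One w \<and>
              (\<forall>k \<le> length w. cnt One (take k w) \<le> cnt Zero (take k w))}"

fun join_stars :: "sym list list \<Rightarrow> sym list" where
  "join_stars [] = []"
| "join_stars [u] = u"
| "join_stars (u # v # us) = u @ [Star] @ join_stars (v # us)"

definition gk_chain :: "nat \<Rightarrow> sym list \<Rightarrow> bool" where
  "gk_chain n C \<longleftrightarrow> length C = n \<and>
     (\<exists>us. us \<noteq> [] \<and> (\<forall>u \<in> set us. u \<in> dyck) \<and> C = join_stars us)"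

fun repl :: "sym list \<Rightarrow> sym list \<Rightarrow> sym list" where
  "repl [] xs = xs"
| "repl (r # rs) [] = []"
| "repl (r # rs) (x # xs) = (if x = Star then r # repl rs xs else x # repl (r # rs) xs)"

definition fC :: "sym list \<Rightarrow> sym list" where
  "fC C = repl [Zero, One] C"

definition lC :: "sym list \<Rightarrow> sym list" where
  "lC C = rev (repl [One, Zero] (rev C))"

definition bottom :: "sym list \<Rightarrow> sym list" where
  "bottom C = map (\<lambda>x. if x = Star then Zero else x) C"

definition ndiff :: "sym list \<Rightarrow> sym list \<Rightarrow> nat" where
  "ndiff x y = card {i. i < length x \<and> x ! i \<noteq> y ! i}"

definition connected_bottom :: "sym list \<Rightarrow> sym list \<Rightarrow> bool" where
  "connected_bottom C D' \<longleftrightarrow> length C = length D' \<and> ndiff (bottom C) (bottom D') = 1"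

end

theory Submission
  imports Defs
begin

text \<open>
  Replacing the first two stars of \<open>*u*C'*\<close> (with \<open>u\<close> star-free) gives \<open>0u1C'*\<close>, and
  \<open>\<ell>\<close> only touches the last two stars, which lie inside \<open>C'\<close> as soon as \<open>C'\<close> has two of them.
  So the two chains are \<open>0u1C'*\<close> and \<open>0u1\<ell>(C')*\<close>; they differ exactly where \<open>\<ell>\<close> turned
  \<open>*,*\<close> into \<open>0,1\<close>, and after sending stars to \<open>0\<close> only the position of the \<open>1\<close> remains.
\<close>

lemma stars_eq_0_iff: "stars w = 0 \<longleftrightarrow> Star \<notin> set w"
  unfolding stars_def by (auto simp: filter_empty_conv)

lemma stars_append [simp]: "stars (v @ w) = stars v + stars w"
  unfolding stars_def by simp

lemma stars_Cons [simp]: "stars (x # w) = (if x = Star then 1 else 0) + stars w"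
  unfolding stars_def by simp

lemma dyck_star_free: "u \<in> dyck \<Longrightarrow> Star \<notin> set u"
  unfolding dyck_def by simp

lemma length_repl [simp]: "length (repl rs w) = length w"
  by (induction rs w rule: repl.induct) auto

lemma repl_append_star_free: "Star \<notin> set u \<Longrightarrow> repl rs (u @ w) = u @ repl rs w"
  by (induction u) (cases rs; auto)+

lemma length_lC [simp]: "length (lC w) = length w"
  unfolding lC_def by simp

lemma fC_star_free_prefix:
  "Star \<notin> set u \<Longrightarrow> fC (Star # u @ Star # w) = Zero # u @ One # w"
  unfolding fC_def by (simp add: repl_append_star_free)

lemma lC_last_two_stars:
  assumes "Star \<notin> set b" and "Star \<notin> set c"
  shows "lC (a @ Star # b @ Star # c) = a @ Zero # b @ One # c"
proof -
  have "repl [One, Zero] (rev c @ Star # rev b @ Star # rev a) = rev c @ One # rev b @ Zero # rev a"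
    using assms by (simp add: repl_append_star_free)
  then show ?thesis unfolding lC_def by simp
qed

lemma last_two_starsE:
  assumes "stars w \<ge> 2"
  obtains a b c where "w = a @ Star # b @ Star # c" and "Star \<notin> set b" and "Star \<notin> set c"
proof -
  have "Star \<in> set w" using assms stars_eq_0_iff[of w] by auto
  then obtain v c where w: "w = v @ Star # c" and c: "Star \<notin> set c"
    using split_list_last by metis
  then have "Star \<in> set v" using assms stars_eq_0_iff[of v] stars_eq_0_iff[of c] by auto
  then obtain a b where "v = a @ Star # b" and "Star \<notin> set b"
    using split_list_last by metis
  with w c that show ?thesis by simp
qed

lemma lC_append_left: "stars w \<ge> 2 \<Longrightarrow> lC (v @ w) = v @ lC w"
  by (elim last_two_starsE) (simp add: lC_last_two_stars flip: append_assoc)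

lemma ndiff_conv_zip:
  "length x = length y \<Longrightarrow> ndiff x y = length (filter (\<lambda>(a, b). a \<noteq> b) (zip x y))"
  unfolding ndiff_def length_filter_conv_card by (simp add: nth_zip cong: conj_cong)

lemma ndiff_append:
  "length xs = length ys \<Longrightarrow> length zs = length ws \<Longrightarrow>
    ndiff (xs @ zs) (ys @ ws) = ndiff xs ys + ndiff zs ws"
  by (simp add: ndiff_conv_zip)

lemma ndiff_Cons:
  "length xs = length ys \<Longrightarrow> ndiff (x # xs) (y # ys) = (if x = y then 0 else 1) + ndiff xs ys"
  by (simp add: ndiff_conv_zip)

lemma ndiff_self [simp]: "ndiff w w = 0"
  unfolding ndiff_def by simp

lemma bottom_append [simp]: "bottom (v @ w) = bottom v @ bottom w"
  unfolding bottom_def by simp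

lemma bottom_Cons [simp]: "bottom (x # w) = (if x = Star then Zero else x) # bottom w"
  unfolding bottom_def by simp

lemma length_bottom [simp]: "length (bottom w) = length w"
  unfolding bottom_def by simp

lemma ndiff_lC:
  assumes "stars w \<ge> 2"
  shows "ndiff w (lC w) = 2" and "ndiff (bottom w) (bottom (lC w)) = 1"
  using assms
  by (elim last_two_starsE; simp add: lC_last_two_stars ndiff_append ndiff_Cons)+

lemma wrapped_chains:
  assumes "Star \<notin> set u" and "stars C' \<ge> 2"
  shows "fC ([Star] @ (u @ [Star] @ C') @ [Star]) = [Zero] @ u @ [One] @ C' @ [Star]"
    and "fC ([Star] @ lC (u @ [Star] @ C') @ [Star]) = [Zero] @ u @ [One] @ lC C' @ [Star]"
proof -
  have "lC (u @ [Star] @ C') = u @ [Star] @ lC C'"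
    using lC_append_left[OF assms(2), of "u @ [Star]"] by simp
  with assms(1) show "fC ([Star] @ (u @ [Star] @ C') @ [Star]) = [Zero] @ u @ [One] @ C' @ [Star]"
    and "fC ([Star] @ lC (u @ [Star] @ C') @ [Star]) = [Zero] @ u @ [One] @ lC C' @ [Star]"
    by (simp_all add: fC_star_free_prefix)
qed

theorem lemma21:
  fixes n :: nat and C :: "sym list"
  assumes "n \<ge> 3" and "gk_chain n C" and "stars C \<ge> 3"
  shows "connected_bottom (fC ([Star] @ C @ [Star])) (fC ([Star] @ lC C @ [Star]))
    \<and> (\<forall>u C'. u \<in> dyck \<and> C = u @ [Star] @ C' \<and> stars C' \<ge> 2 \<longrightarrow>
          fC ([Star] @ C @ [Star]) = [Zero] @ u @ [One] @ C' @ [Star]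
        \<and> fC ([Star] @ lC C @ [Star]) = [Zero] @ u @ [One] @ lC C' @ [Star])
    \<and> length (fC ([Star] @ C @ [Star])) = length (fC ([Star] @ lC C @ [Star]))
    \<and> ndiff (fC ([Star] @ C @ [Star])) (fC ([Star] @ lC C @ [Star])) = 2"
proof -
  have "Star \<in> set C" using assms(3) stars_eq_0_iff[of C] by auto
  then obtain u C' where C: "C = u @ [Star] @ C'" and u: "Star \<notin> set u"
    using split_list_first by fastforce
  have C': "stars C' \<ge> 2" using assms(3) u C stars_eq_0_iff[of u] by simp
  note chains = wrapped_chains[OF u C', folded C]
  have "ndiff (fC ([Star] @ C @ [Star])) (fC ([Star] @ lC C @ [Star])) = 2"
    unfolding chains using ndiff_lC(1)[OF C'] by (simp add: ndiff_append ndiff_Cons)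
  moreover have "ndiff (bottom (fC ([Star] @ C @ [Star]))) (bottom (fC ([Star] @ lC C @ [Star]))) = 1"
    unfolding chains using ndiff_lC(2)[OF C'] by (simp add: ndiff_append ndiff_Cons)
  moreover have "length (fC ([Star] @ C @ [Star])) = length (fC ([Star] @ lC C @ [Star]))"
    unfolding chains by simp
  moreover have "fC ([Star] @ C @ [Star]) = [Zero] @ v @ [One] @ D' @ [Star]
      \<and> fC ([Star] @ lC C @ [Star]) = [Zero] @ v @ [One] @ lC D' @ [Star]"
    if "v \<in> dyck" and "C = v @ [Star] @ D'" and "stars D' \<ge> 2" for v D'
    using wrapped_chains[OF dyck_star_free that(3)] that by simp
  ultimately show ?thesis unfolding connected_bottom_def by blast
qed

end
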